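(* Let $k\ge1$ and work in $\mathbb{R}^{2k}$ with standard basis $e_1,\dots,e_{2k}$. Define polytopes \[ P_{2\ell}=\mathrm{Conv}\{0,\ \ell e_2,\ell e_4,\dots,\ell e_{2k},\ 2\ell e_1,2\ell e_3,\dots,2\ell e_{2k-1}\},\quad \ell\ge1, \] \[ P_{i}=\mathrm{Conv}\{0,\ \tfrac{i-1}{2} e_2,\dots,\tfrac{i-1}{2} e_{2k},\ i e_1,i e_3,\dots,i e_{2k-1}\},\quad i\ge1 \text{ odd}, \] and line segments $Q_{2\ell-1}=\mathrm{Conv}\{0,(2\ell-1)e_{2\ell-1}\}$, $Q_{2\ell}=\mathrm{Conv}\{0,\ell e_{2\ell}\}$ for $\ell\in[k]$. For every nonzero $w\in\mathbb{R}^{2k}$, the set \[ \mathcal I_w=\{i\in[2k]:\ Q_i\cap \mathrm{Init}_w(P_i)\neq\emptyset\} \] is nonempty.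
   Context: For $w\in\mathbb{R}^n$ and a convex polytope $P\subset\mathbb{R}^n$, $\mathrm{Init}_w(P)=\{x\in P:\langle w,x\rangle\le\langle w,y\rangle \text{ for all } y\in P\}$ is the face of $P$ on which the linear functional $x\mapsto\langle w,x\rangle$ attains its minimum. (The polytopes $P_i$ are the Newton polytopes, in the variable order $(\mu_1,s_1,\dots,\mu_k,s_k)$, of the $i$-th moment equation $\sum_\ell\bar\lambda_\ell M_i(\mu_\ell,s_\ell)-\bar m_i$ of a $k$-component univariate Gaussian mixture with known weights.) *)

theory Defs
  imports Main "HOL-Analysis.Analysis"
begin

text \<open>Vectors of R^(2k) are represented as functions nat => real, coordinates 1..2k
  (coordinates outside are irrelevant for points of the polytopes, which vanish there).\<close>

type_synonym vec = "nat \<Rightarrow> real"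

definition zero_vec :: vec where "zero_vec = (\<lambda>_. 0)"

definition basis_vec :: "nat \<Rightarrow> vec" ("\<ee>") where
  "basis_vec j = (\<lambda>i. if i = j then 1 else 0)"

definition scale_vec :: "real \<Rightarrow> vec \<Rightarrow> vec" where
  "scale_vec c v = (\<lambda>i. c * v i)"

definition convex_vec :: "vec set \<Rightarrow> bool" where
  "convex_vec S \<longleftrightarrow> (\<forall>x\<in>S. \<forall>y\<in>S. \<forall>u::real. 0 \<le> u \<and> u \<le> 1 \<longrightarrow>
      (\<lambda>i. u * x i + (1 - u) * y i) \<in> S)"

definition Conv :: "vec set \<Rightarrow> vec set" where
  "Conv S = convex_vec hull S"

definition ip :: "nat \<Rightarrow> vec \<Rightarrow> vec \<Rightarrow> real" where
  "ip k w x = (\<Sum>i = 1..2*k. w i * x i)"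

definition Init :: "nat \<Rightarrow> vec \<Rightarrow> vec set \<Rightarrow> vec set" where
  "Init k w P = {x \<in> P. \<forall>y\<in>P. ip k w x \<le> ip k w y}"

definition Ppoly :: "nat \<Rightarrow> nat \<Rightarrow> vec set" where
  "Ppoly k i =
    (if even i then
       (let l = i div 2 in
        Conv ({zero_vec}
              \<union> {scale_vec (real l) (\<ee> (2*j)) | j. j \<in> {1..k}}
              \<union> {scale_vec (real (2*l)) (\<ee> (2*j - 1)) | j. j \<in> {1..k}}))
     else
        Conv ({zero_vec}
              \<union> {scale_vec ((real i - 1) / 2) (\<ee> (2*j)) | j. j \<in> {1..k}}
              \<union> {scale_vec (real i) (\<ee> (2*j - 1)) | j. j \<in> {1..k}}))"

definition Qseg :: "nat \<Rightarrow> vec set" where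
  "Qseg i =
    (if even i then Conv {zero_vec, scale_vec (real (i div 2)) (\<ee> i)}
     else Conv {zero_vec, scale_vec (real i) (\<ee> i)})"

definition Iw :: "nat \<Rightarrow> vec \<Rightarrow> nat set" where
  "Iw k w = {i \<in> {1..2*k}. Qseg i \<inter> Init k w (Ppoly k i) \<noteq> {}}"

end

theory Submission
  imports Defs
begin

text \<open>Put \<open>\<nu>\<^sub>i = w\<^sub>i\<close> for even \<open>i\<close> and \<open>\<nu>\<^sub>i = 2 w\<^sub>i\<close> for odd \<open>i\<close>; at the nonzero vertices
  of \<open>P\<^sub>2\<^sub>\<ell>\<close> the functional \<open>w\<close> takes the values \<open>\<ell> \<nu>\<^sub>j\<close>. Let \<open>i\<close> minimise \<open>\<nu>\<close>.
  If \<open>\<nu>\<^sub>i \<ge> 0\<close>, then \<open>w \<ge> 0\<close> and the origin, which lies in every \<open>Q\<^sub>i\<close>, minimises \<open>w\<close>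
  on \<open>P\<^sub>2\<close>. Otherwise the endpoint of \<open>Q\<^sub>i\<close> on the \<open>e\<^sub>i\<close>-axis is a vertex of \<open>P\<^sub>i\<close>
  minimising \<open>w\<close>; for odd \<open>i\<close> this also uses \<open>\<nu>\<^sub>i < 0\<close>, because the even coordinates
  of the vertices of \<open>P\<^sub>i\<close> then carry the coefficient \<open>(i-1)/2 < i/2\<close>.\<close>

definition vertices :: "nat \<Rightarrow> real \<Rightarrow> real \<Rightarrow> vec set" where
  "vertices k a b = {zero_vec}
     \<union> {scale_vec a (\<ee> (2*j)) | j. j \<in> {1..k}}
     \<union> {scale_vec b (\<ee> (2*j - 1)) | j. j \<in> {1..k}}"

definition vertex_weight :: "vec \<Rightarrow> nat \<Rightarrow> real" where
  "vertex_weight w i = (if even i then w i else 2 * w i)"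

lemma Ppoly_even: "Ppoly k (2*l) = Conv (vertices k (real l) (real (2*l)))"
  by (simp add: Ppoly_def vertices_def)

lemma Ppoly_odd: "odd i \<Longrightarrow> Ppoly k i = Conv (vertices k ((real i - 1) / 2) (real i))"
  by (simp add: Ppoly_def vertices_def)

lemma ip_zero_vec: "ip k w zero_vec = 0"
  by (simp add: ip_def zero_vec_def)

lemma ip_scale_basis: "j \<in> {1..2*k} \<Longrightarrow> ip k w (scale_vec c (\<ee> j)) = c * w j"
  unfolding ip_def scale_vec_def basis_vec_def
  by (simp add: if_distrib cong: if_cong)

lemma ip_convex_combination:
  "ip k w (\<lambda>i. u * x i + (1 - u) * y i) = u * ip k w x + (1 - u) * ip k w y"
proof -
  have "ip k w (\<lambda>i. u * x i + (1 - u) * y i)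
      = (\<Sum>i = 1..2*k. u * (w i * x i) + (1 - u) * (w i * y i))"
    unfolding ip_def by (rule sum.cong) (auto simp: algebra_simps)
  then show ?thesis unfolding ip_def by (simp add: sum.distrib sum_distrib_left)
qed

lemma convex_vec_halfspace: "convex_vec {y. a \<le> ip k w y}"
  unfolding convex_vec_def
proof (intro ballI allI impI)
  fix x y and u :: real
  assume "x \<in> {y. a \<le> ip k w y}" "y \<in> {y. a \<le> ip k w y}" and u: "0 \<le> u \<and> u \<le> 1"
  then have "u * a \<le> u * ip k w x" "(1 - u) * a \<le> (1 - u) * ip k w y"
    by (simp_all add: mult_left_mono)
  then show "(\<lambda>i. u * x i + (1 - u) * y i) \<in> {y. a \<le> ip k w y}"
    unfolding mem_Collect_eq ip_convex_combination by (simp add: algebra_simps)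
qed

lemma Init_Conv_if_minimal:
  assumes "x \<in> S" "\<forall>v\<in>S. ip k w x \<le> ip k w v"
  shows "x \<in> Init k w (Conv S)"
proof -
  have "x \<in> Conv S" unfolding Conv_def using assms(1) by (rule hull_inc)
  moreover have "Conv S \<subseteq> {y. ip k w x \<le> ip k w y}"
    unfolding Conv_def by (rule hull_minimal) (use assms(2) convex_vec_halfspace in auto)
  ultimately show ?thesis unfolding Init_def by auto
qed

lemma Init_Conv_vertices:
  assumes "x \<in> vertices k a b" "ip k w x \<le> 0"
    and "\<And>j. j \<in> {1..k} \<Longrightarrow> ip k w x \<le> a * w (2*j) \<and> ip k w x \<le> b * w (2*j - 1)"
  shows "x \<in> Init k w (Conv (vertices k a b))"
proof (rule Init_Conv_if_minimal[OF assms(1)], rule ballI)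
  fix v assume "v \<in> vertices k a b"
  then consider "v = zero_vec"
    | j where "j \<in> {1..k}" "v = scale_vec a (\<ee> (2*j))"
    | j where "j \<in> {1..k}" "v = scale_vec b (\<ee> (2*j - 1))"
    unfolding vertices_def by blast
  then show "ip k w x \<le> ip k w v"
  proof cases
    case 1
    then show ?thesis using assms(2) by (simp add: ip_zero_vec)
  next
    case (2 j)
    then have "2*j \<in> {1..2*k}" by auto
    then show ?thesis using 2 assms(3) by (simp add: ip_scale_basis)
  next
    case (3 j)
    then have "2*j - 1 \<in> {1..2*k}" by auto
    then show ?thesis using 3 assms(3) by (simp add: ip_scale_basis)
  qed
qed

lemma zero_vec_Init_Ppoly:
  assumes "\<forall>j\<in>{1..2*k}. 0 \<le> w j"
  shows "zero_vec \<in> Init k w (Ppoly k i)"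
proof -
  have nonneg: "zero_vec \<in> Init k w (Conv (vertices k a b))" if "0 \<le> a" "0 \<le> b" for a b
  proof (rule Init_Conv_vertices)
    fix j assume "j \<in> {1..k}"
    then have "2*j \<in> {1..2*k}" "2*j - 1 \<in> {1..2*k}" by auto
    then have "0 \<le> w (2*j)" "0 \<le> w (2*j - 1)" using assms by blast+
    then show "ip k w zero_vec \<le> a * w (2*j) \<and> ip k w zero_vec \<le> b * w (2*j - 1)"
      using that by (simp add: ip_zero_vec)
  qed (simp_all add: vertices_def ip_zero_vec)
  show ?thesis
  proof (cases "even i")
    case True
    then obtain l where "i = 2*l" by blast
    then show ?thesis using nonneg by (simp add: Ppoly_even)
  next
    case False
    then have "1 \<le> real i" using odd_pos by fastforce
    then show ?thesis using False nonneg by (simp add: Ppoly_odd)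
  qed
qed

lemma axis_vertex_Init_Ppoly_even:
  assumes i: "i \<in> {1..2*k}" "even i"
    and min: "\<forall>j\<in>{1..2*k}. vertex_weight w i \<le> vertex_weight w j" and neg: "w i \<le> 0"
  shows "scale_vec (real (i div 2)) (\<ee> i) \<in> Init k w (Ppoly k i)"
proof -
  obtain l where l: "i = 2*l" "l \<in> {1..k}" using i by (auto elim!: evenE)
  have "scale_vec (real l) (\<ee> (2*l)) \<in> Init k w (Conv (vertices k (real l) (real (2*l))))"
  proof (rule Init_Conv_vertices)
    have ip_x: "ip k w (scale_vec (real l) (\<ee> (2*l))) = real l * w (2*l)"
      using i l by (simp add: ip_scale_basis)
    then show "ip k w (scale_vec (real l) (\<ee> (2*l))) \<le> 0"
      using neg l by (simp add: mult_nonneg_nonpos)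
    fix j assume "j \<in> {1..k}"
    then have "2*j \<in> {1..2*k}" "2*j - 1 \<in> {1..2*k}" by auto
    then have "w (2*l) \<le> w (2*j)" "w (2*l) \<le> 2 * w (2*j - 1)"
      using min[rule_format, of "2*j"] min[rule_format, of "2*j - 1"] l
      by (auto simp: vertex_weight_def)
    then have "real l * w (2*l) \<le> real l * w (2*j)"
      "real l * w (2*l) \<le> real l * (2 * w (2*j - 1))"
      by (simp_all add: mult_left_mono)
    then show "ip k w (scale_vec (real l) (\<ee> (2*l))) \<le> real l * w (2*j)
      \<and> ip k w (scale_vec (real l) (\<ee> (2*l))) \<le> real (2*l) * w (2*j - 1)"
      unfolding ip_x by simp
  qed (use l in \<open>auto simp: vertices_def\<close>)
  then show ?thesis using l by (simp add: Ppoly_even)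
qed

lemma axis_vertex_Init_Ppoly_odd:
  assumes i: "i \<in> {1..2*k}" "odd i"
    and min: "\<forall>j\<in>{1..2*k}. vertex_weight w i \<le> vertex_weight w j" and neg: "w i < 0"
  shows "scale_vec (real i) (\<ee> i) \<in> Init k w (Ppoly k i)"
proof -
  define l where "l = (i + 1) div 2"
  have l: "i = 2*l - 1" "l \<in> {1..k}" using i unfolding l_def by auto presburger+
  have ip_x: "ip k w (scale_vec (real i) (\<ee> i)) = real i * w i"
    using i by (simp add: ip_scale_basis)
  have "scale_vec (real i) (\<ee> i) \<in> Init k w (Conv (vertices k ((real i - 1) / 2) (real i)))"
  proof (rule Init_Conv_vertices)
    show "ip k w (scale_vec (real i) (\<ee> i)) \<le> 0"
      using neg unfolding ip_x by (simp add: mult_nonneg_nonpos)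
    fix j assume "j \<in> {1..k}"
    then have "2*j \<in> {1..2*k}" "2*j - 1 \<in> {1..2*k}" by auto
    then have "2 * w i \<le> w (2*j)" "w i \<le> w (2*j - 1)"
      using min[rule_format, of "2*j"] min[rule_format, of "2*j - 1"] i
      by (auto simp: vertex_weight_def)
    moreover have "1 \<le> real i" using i by simp
    ultimately have "(real i - 1) / 2 * (2 * w i) \<le> (real i - 1) / 2 * w (2*j)"
      "real i * w i \<le> real i * w (2*j - 1)"
      by (intro mult_left_mono; simp)+
    moreover have "real i * w i \<le> (real i - 1) * w i" using neg by simp
    ultimately have "real i * w i \<le> (real i - 1) / 2 * w (2*j)"
      "real i * w i \<le> real i * w (2*j - 1)"
      by simp_all
    then show "ip k w (scale_vec (real i) (\<ee> i)) \<le> (real i - 1) / 2 * w (2*j)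
      \<and> ip k w (scale_vec (real i) (\<ee> i)) \<le> real i * w (2*j - 1)"
      unfolding ip_x by simp
  qed (use l in \<open>auto simp: vertices_def\<close>)
  then show ?thesis using i by (simp add: Ppoly_odd)
qed

lemma zero_vec_in_Qseg: "zero_vec \<in> Qseg i"
  unfolding Qseg_def Conv_def by (auto intro: hull_inc)

lemma axis_vertex_in_Qseg:
  "scale_vec (if even i then real (i div 2) else real i) (\<ee> i) \<in> Qseg i"
  unfolding Qseg_def Conv_def by (auto intro: hull_inc)

lemma Iw_nonempty:
  "i \<in> {1..2*k} \<Longrightarrow> x \<in> Qseg i \<Longrightarrow> x \<in> Init k w (Ppoly k i) \<Longrightarrow> Iw k w \<noteq> {}"
  unfolding Iw_def by blast

theorem mainTheorem4:
  fixes k :: nat and w :: "nat \<Rightarrow> real"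
  assumes "k \<ge> 1"
    and "\<forall>i. i \<notin> {1..2*k} \<longrightarrow> w i = 0"
    and "\<exists>i\<in>{1..2*k}. w i \<noteq> 0"
  shows "Iw k w \<noteq> {}"
proof -
  have "Min (vertex_weight w ` {1..2*k}) \<in> vertex_weight w ` {1..2*k}"
    using assms(1) by (intro Min_in) auto
  then obtain i where i: "i \<in> {1..2*k}" and "vertex_weight w i = Min (vertex_weight w ` {1..2*k})"
    by auto
  then have min: "\<forall>j\<in>{1..2*k}. vertex_weight w i \<le> vertex_weight w j" by simp
  show ?thesis
  proof (cases "0 \<le> vertex_weight w i")
    case True
    then have "\<forall>j\<in>{1..2*k}. 0 \<le> w j"
      using min by (fastforce simp: vertex_weight_def split: if_splits)
    then show ?thesis
      using Iw_nonempty[OF _ zero_vec_in_Qseg zero_vec_Init_Ppoly, of 2] assms(1) by simp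
  next
    case False
    then have neg: "w i < 0" by (simp add: vertex_weight_def split: if_splits)
    show ?thesis
    proof (cases "even i")
      case True
      then show ?thesis
        using Iw_nonempty[OF i axis_vertex_in_Qseg] axis_vertex_Init_Ppoly_even[OF i True min] neg
        by simp
    next
      case False
      then show ?thesis
        using Iw_nonempty[OF i axis_vertex_in_Qseg] axis_vertex_Init_Ppoly_odd[OF i False min neg]
        by simp
    qed
  qed
qed

end
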